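(* Let $c_n$ be the number of equivalence classes of $n$-diagrams under the action of the cyclic group $C_{2n}$ of order $2n$ generated by the rotation $j\mapsto j+1\pmod{2n}$ of $[2n]$. Then $c_n\ge \underline{c}_n := (2n)^{-1}(2n-1)!!$ for $n\ge1$, and \[ c_n \sim \frac{(2n-1)!!}{2n} \quad \text{as } n\to\infty. \]
   Context: A chord diagram of order $n$ (an $n$-diagram) is a 3-regular graph on vertex set $[2n]=\{1,\dots,2n\}$ containing the $2n$-circuit $\Delta_{2n}=(1\,2\,\dots\,2n)$ as a subgraph; the edges not in $\Delta_{2n}$ are the chords (they form a perfect matching of $[2n]$). Given a group $G$ of permutations of $[2n]$ acting on $\Delta_{2n}$, two $n$-diagrams are equivalent if some $g\in G$ takes the chords of the first onto the chords of the second. *)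

theory Defs
  imports Main "HOL-Library.Landau_Symbols"
begin

definition chord_sets :: "nat \<Rightarrow> nat set set set" where
  "chord_sets n = {M. (\<forall>e\<in>M. e \<subseteq> {1..2*n} \<and> card e = 2)
                    \<and> (\<forall>e\<in>M. \<forall>f\<in>M. e \<noteq> f \<longrightarrow> e \<inter> f = {})
                    \<and> \<Union>M = {1..2*n}}"

definition rot :: "nat \<Rightarrow> nat \<Rightarrow> nat" where
  "rot n j = j mod (2*n) + 1"

definition cyc_equiv :: "nat \<Rightarrow> (nat set set \<times> nat set set) set" where
  "cyc_equiv n = {(M, N). M \<in> chord_sets n \<and> N \<in> chord_sets n \<and>
      (\<exists>k::nat. (\<lambda>e. ((rot n) ^^ k) ` e) ` M = N)}"

definition c_num :: "nat \<Rightarrow> nat" where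
  "c_num n = card (chord_sets n // cyc_equiv n)"

definition odd_dfact :: "nat \<Rightarrow> nat" where
  "odd_dfact n = (\<Prod>i\<in>{1..n}. 2*i - 1)"

end

theory Submission
  imports Defs "HOL-Library.FuncSet" "HOL-Real_Asymp.Real_Asymp"
begin

text \<open>The \<open>(2n-1)!!\<close> diagrams fall into rotation classes of size at most \<open>2n\<close>, which gives
  the lower bound. A class of size less than \<open>2n\<close> consists of diagrams fixed by a nontrivial
  rotation, hence by the rotation by a proper divisor \<open>d\<close> of \<open>2n\<close>. For \<open>d = n\<close> this rotation
  is a fixed-point-free involution, and removing the chord at a point together with its image
  shows that at most \<open>2^n \<surd>(n!)\<close> diagrams are invariant under it. For \<open>3d \<le> 2n\<close> a fixed
  diagram is determined by the mates of \<open>1, \<dots>, d\<close>, so there are at most \<open>(2n)^d\<close> of them.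
  Since \<open>(2n-1)!! \<ge> n! \<ge> (n/e)^n\<close>, both counts are \<open>o((2n-1)!!/n)\<close>.\<close>

section \<open>Perfect matchings\<close>

definition perfect_matchings :: "'a set \<Rightarrow> 'a set set set" where
  "perfect_matchings S = {M. (\<forall>e\<in>M. e \<subseteq> S \<and> card e = 2)
                    \<and> (\<forall>e\<in>M. \<forall>f\<in>M. e \<noteq> f \<longrightarrow> e \<inter> f = {})
                    \<and> \<Union>M = S}"

lemma chord_sets_eq_perfect_matchings: "chord_sets n = perfect_matchings {1..2*n}"
  unfolding chord_sets_def perfect_matchings_def by simp

lemma finite_perfect_matchings: "finite S \<Longrightarrow> finite (perfect_matchings S)"
  by (rule finite_subset[of _ "Pow (Pow S)"]) (auto simp: perfect_matchings_def)

lemma perfect_matchings_empty: "perfect_matchings {} = {{}}"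
  unfolding perfect_matchings_def by auto

lemma perfect_matching_subset: "M \<in> perfect_matchings S \<Longrightarrow> e \<in> M \<Longrightarrow> e \<subseteq> S"
  unfolding perfect_matchings_def by blast

lemma perfect_matching_card: "M \<in> perfect_matchings S \<Longrightarrow> e \<in> M \<Longrightarrow> card e = 2"
  unfolding perfect_matchings_def by blast

lemma perfect_matching_disjoint:
  "M \<in> perfect_matchings S \<Longrightarrow> e \<in> M \<Longrightarrow> f \<in> M \<Longrightarrow> e \<noteq> f \<Longrightarrow> e \<inter> f = {}"
  unfolding perfect_matchings_def by blast

lemma perfect_matching_Union: "M \<in> perfect_matchings S \<Longrightarrow> \<Union>M = S"
  unfolding perfect_matchings_def by blast

lemma perfect_matching_Diff:
  assumes M: "M \<in> perfect_matchings S" and "E \<subseteq> M"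
  shows "M - E \<in> perfect_matchings (S - \<Union>E)"
proof -
  have "e \<inter> \<Union>E = {}" if "e \<in> M - E" for e
    using that \<open>E \<subseteq> M\<close> perfect_matching_disjoint[OF M] by blast
  then show ?thesis
    using M perfect_matching_Union[OF M] unfolding perfect_matchings_def by blast
qed

lemma insert_perfect_matching:
  "M \<in> perfect_matchings (S - {x, y}) \<Longrightarrow> x \<in> S \<Longrightarrow> y \<in> S \<Longrightarrow> x \<noteq> y
    \<Longrightarrow> insert {x, y} M \<in> perfect_matchings S"
  unfolding perfect_matchings_def by auto

definition mate :: "'a set set \<Rightarrow> 'a \<Rightarrow> 'a" where
  "mate M x = (THE y. {x, y} \<in> M)"

lemma mate_eq:
  assumes M: "M \<in> perfect_matchings S" and "{x, y} \<in> M"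
  shows "mate M x = y"
  unfolding mate_def
proof (rule the_equality)
  fix z assume "{x, z} \<in> M"
  then have "{x, z} = {x, y}"
    using perfect_matching_disjoint[OF M] \<open>{x, y} \<in> M\<close> by blast
  then show "z = y" by (metis doubleton_eq_iff)
qed fact

lemma perfect_matching_edge_eq:
  assumes M: "M \<in> perfect_matchings S" and "e \<in> M" "x \<in> e"
  shows "e = {x, mate M x}"
proof -
  obtain a b where "a \<noteq> b" "e = {a, b}"
    using perfect_matching_card[OF M \<open>e \<in> M\<close>] by (meson card_2_iff)
  then obtain y where "e = {x, y}" using \<open>x \<in> e\<close> by blast
  then show ?thesis using mate_eq[OF M] \<open>e \<in> M\<close> by simp
qed

lemma mate_in_perfect_matching:
  assumes M: "M \<in> perfect_matchings S" and "x \<in> S"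
  shows "{x, mate M x} \<in> M" "mate M x \<in> S" "mate M x \<noteq> x"
proof -
  obtain e where e: "e \<in> M" "x \<in> e"
    using perfect_matching_Union[OF M] \<open>x \<in> S\<close> by blast
  with perfect_matching_edge_eq[OF M] show "{x, mate M x} \<in> M" by simp
  then show "mate M x \<in> S" using perfect_matching_subset[OF M] by blast
  show "mate M x \<noteq> x"
    using perfect_matching_card[OF M \<open>{x, mate M x} \<in> M\<close>] by force
qed

lemma perfect_matching_eqI:
  assumes M: "M \<in> perfect_matchings S" and M': "M' \<in> perfect_matchings S"
    and mates: "\<And>x. x \<in> S \<Longrightarrow> mate M x = mate M' x"
  shows "M = M'"
proof -
  have "M \<subseteq> M'" if M: "M \<in> perfect_matchings S" and M': "M' \<in> perfect_matchings S"
    and mates: "\<And>x. x \<in> S \<Longrightarrow> mate M x = mate M' x" for M M'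
  proof
    fix e assume "e \<in> M"
    then obtain x where "x \<in> e"
      using perfect_matching_card[OF M] by (metis card.empty ex_in_conv zero_neq_numeral)
    then have "x \<in> S" using perfect_matching_subset[OF M \<open>e \<in> M\<close>] by blast
    have "e = {x, mate M' x}"
      using perfect_matching_edge_eq[OF M \<open>e \<in> M\<close> \<open>x \<in> e\<close>] mates[OF \<open>x \<in> S\<close>] by simp
    then show "e \<in> M'" using mate_in_perfect_matching[OF M' \<open>x \<in> S\<close>] by simp
  qed
  then show ?thesis using assms by (metis subset_antisym)
qed

lemma mate_image:
  assumes M: "M \<in> perfect_matchings S" and inv: "(\<lambda>e. f ` e) ` M = M" and "x \<in> S"
  shows "mate M (f x) = f (mate M x)"
proof -
  have "f ` {x, mate M x} \<in> M"
    using inv mate_in_perfect_matching(1)[OF M \<open>x \<in> S\<close>] by blast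
  then show ?thesis using mate_eq[OF M] by simp
qed

lemma perfect_matchings_split:
  assumes "x \<in> S"
  shows "perfect_matchings S
           = (\<Union>y\<in>S - {x}. insert {x, y} ` perfect_matchings (S - {x, y}))"
proof (intro equalityI subsetI)
  fix M assume M: "M \<in> perfect_matchings S"
  let ?y = "mate M x"
  have "M - {{x, ?y}} \<in> perfect_matchings (S - {x, ?y})"
    using perfect_matching_Diff[OF M, of "{{x, ?y}}"] mate_in_perfect_matching[OF M assms] by simp
  moreover have "M = insert {x, ?y} (M - {{x, ?y}})"
    using mate_in_perfect_matching[OF M assms] by auto
  ultimately show "M \<in> (\<Union>y\<in>S - {x}. insert {x, y} ` perfect_matchings (S - {x, y}))"
    using mate_in_perfect_matching[OF M assms] by blast
qed (use assms in \<open>auto intro: insert_perfect_matching\<close>)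

lemma odd_dfact_Suc: "odd_dfact (Suc r) = (2*r + 1) * odd_dfact r"
  unfolding odd_dfact_def by (simp add: prod.nat_ivl_Suc')

lemma card_perfect_matchings:
  "finite S \<Longrightarrow> card S = 2*r \<Longrightarrow> card (perfect_matchings S) = odd_dfact r"
proof (induction r arbitrary: S)
  case 0
  then show ?case by (simp add: perfect_matchings_empty odd_dfact_def)
next
  case (Suc r)
  then obtain x where x: "x \<in> S" by fastforce
  let ?P = "\<lambda>y. insert {x, y} ` perfect_matchings (S - {x, y})"
  have card_P: "card (?P y) = odd_dfact r" if y: "y \<in> S - {x}" for y
  proof -
    have "inj_on (insert {x, y}) (perfect_matchings (S - {x, y}))"
      by (rule inj_onI) (metis insert_ident perfect_matching_subset Diff_iff insertI1 subsetD)
    moreover have "card (S - {x, y}) = 2*r" using Suc.prems x y by (auto simp: card_Diff_subset)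
    ultimately show ?thesis using Suc by (simp add: card_image)
  qed
  have disjoint: "?P y \<inter> ?P z = {}" if "y \<in> S - {x}" "z \<in> S - {x}" "y \<noteq> z" for y z
  proof (rule ccontr)
    assume "?P y \<inter> ?P z \<noteq> {}"
    then obtain A B where AB: "A \<in> perfect_matchings (S - {x, y})"
      "insert {x, y} A = insert {x, z} B" by blast
    then have "{x, z} \<in> A" using \<open>y \<noteq> z\<close> by (metis doubleton_eq_iff insertCI insertE)
    then show False using perfect_matching_subset[OF AB(1)] by blast
  qed
  have "card (perfect_matchings S) = (\<Sum>y\<in>S - {x}. card (?P y))"
    unfolding perfect_matchings_split[OF x] using Suc.prems disjoint
    by (intro card_UN_disjoint) (auto intro!: finite_imageI finite_perfect_matchings)
  also have "\<dots> = (2*r + 1) * odd_dfact r" using card_P Suc.prems x by simp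
  finally show ?case by (simp add: odd_dfact_Suc)
qed

section \<open>Matchings invariant under a fixed-point-free involution\<close>

definition fpf_involution :: "('a \<Rightarrow> 'a) \<Rightarrow> 'a set \<Rightarrow> bool" where
  "fpf_involution \<sigma> S \<longleftrightarrow> (\<forall>x\<in>S. \<sigma> x \<in> S \<and> \<sigma> x \<noteq> x \<and> \<sigma> (\<sigma> x) = x)"

definition invariant_matchings :: "('a \<Rightarrow> 'a) \<Rightarrow> 'a set \<Rightarrow> 'a set set set" where
  "invariant_matchings \<sigma> S = {M \<in> perfect_matchings S. (\<lambda>e. \<sigma> ` e) ` M = M}"

lemma fpf_involution_remove_orbit:
  assumes \<sigma>: "fpf_involution \<sigma> S" and "finite S" "x \<in> S"
  shows "fpf_involution \<sigma> (S - {x, \<sigma> x})" "card (S - {x, \<sigma> x}) = card S - 2"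
proof -
  have \<sigma>x: "\<sigma> x \<in> S" "\<sigma> x \<noteq> x" "\<sigma> (\<sigma> x) = x"
    using \<sigma> \<open>x \<in> S\<close> unfolding fpf_involution_def by auto
  then show "card (S - {x, \<sigma> x}) = card S - 2"
    using \<open>finite S\<close> \<open>x \<in> S\<close> by (simp add: card_Diff_subset)
  show "fpf_involution \<sigma> (S - {x, \<sigma> x})"
    unfolding fpf_involution_def
  proof
    fix y assume y: "y \<in> S - {x, \<sigma> x}"
    then have \<sigma>y: "\<sigma> y \<in> S" "\<sigma> y \<noteq> y" "\<sigma> (\<sigma> y) = y"
      using \<sigma> unfolding fpf_involution_def by auto
    have "y \<noteq> x" "y \<noteq> \<sigma> x" using y by auto
    then have "\<sigma> y \<noteq> x" "\<sigma> y \<noteq> \<sigma> x" using \<sigma>y(3) \<sigma>x(3) by metis+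
    with \<sigma>y show "\<sigma> y \<in> S - {x, \<sigma> x} \<and> \<sigma> y \<noteq> y \<and> \<sigma> (\<sigma> y) = y" by blast
  qed
qed

lemma finite_invariant_matchings: "finite S \<Longrightarrow> finite (invariant_matchings \<sigma> S)"
  unfolding invariant_matchings_def by (simp add: finite_perfect_matchings)

lemma invariant_matching_Diff:
  assumes \<sigma>: "fpf_involution \<sigma> S" and M: "M \<in> invariant_matchings \<sigma> S"
    and "E \<subseteq> M" and E: "(\<lambda>e. \<sigma> ` e) ` E = E"
  shows "M - E \<in> invariant_matchings \<sigma> (S - \<Union>E)"
proof -
  have "inj_on \<sigma> S" using \<sigma> unfolding fpf_involution_def by (metis inj_onI)
  then have inj: "inj_on (\<lambda>e. \<sigma> ` e) (Pow S)" by (rule inj_on_image_Pow)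
  have PM: "M \<in> perfect_matchings S" using M unfolding invariant_matchings_def by simp
  then have "M \<subseteq> Pow S" using perfect_matching_subset by blast
  then have "(\<lambda>e. \<sigma> ` e) ` (M - E) = (\<lambda>e. \<sigma> ` e) ` M - (\<lambda>e. \<sigma> ` e) ` E"
    using inj \<open>E \<subseteq> M\<close> by (intro inj_on_image_set_diff) blast+
  then have "(\<lambda>e. \<sigma> ` e) ` (M - E) = M - E"
    using M E unfolding invariant_matchings_def by simp
  with perfect_matching_Diff[OF PM \<open>E \<subseteq> M\<close>] show ?thesis
    unfolding invariant_matchings_def by simp
qed

lemma invariant_matchings_subset:
  assumes \<sigma>: "fpf_involution \<sigma> S" and x: "x \<in> S"
  shows "invariant_matchings \<sigma> S
    \<subseteq> insert {x, \<sigma> x} ` invariant_matchings \<sigma> (S - {x, \<sigma> x})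
      \<union> (\<Union>y\<in>S - {x, \<sigma> x}. (\<lambda>M. insert {x, y} (insert {\<sigma> x, \<sigma> y} M))
                                  ` invariant_matchings \<sigma> (S - {x, \<sigma> x} - {y, \<sigma> y}))"
    (is "_ \<subseteq> ?A \<union> ?B")
proof
  fix M assume M: "M \<in> invariant_matchings \<sigma> S"
  then have PM: "M \<in> perfect_matchings S" and inv: "(\<lambda>e. \<sigma> ` e) ` M = M"
    unfolding invariant_matchings_def by auto
  define y where "y = mate M x"
  have y: "{x, y} \<in> M" "y \<in> S" "y \<noteq> x"
    unfolding y_def using mate_in_perfect_matching[OF PM x] by auto
  have \<sigma>x: "\<sigma> x \<in> S" "\<sigma> x \<noteq> x" "\<sigma> (\<sigma> x) = x" and \<sigma>y: "\<sigma> y \<in> S" "\<sigma> (\<sigma> y) = y"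
    using \<sigma> x y(2) unfolding fpf_involution_def by auto
  show "M \<in> ?A \<union> ?B"
  proof (cases "y = \<sigma> x")
    case True
    let ?E = "{{x, \<sigma> x}}"
    have "?E \<subseteq> M" using y True by simp
    moreover have "(\<lambda>e. \<sigma> ` e) ` ?E = ?E" using \<sigma>x by (simp add: insert_commute)
    ultimately have "M - ?E \<in> invariant_matchings \<sigma> (S - \<Union>?E)"
      by (rule invariant_matching_Diff[OF \<sigma> M])
    then have "M - ?E \<in> invariant_matchings \<sigma> (S - {x, \<sigma> x})" by simp
    moreover have "M = insert {x, \<sigma> x} (M - ?E)" using y True by auto
    ultimately show ?thesis by blast
  next
    case False
    let ?E = "{{x, y}, {\<sigma> x, \<sigma> y}}"
    have "\<sigma> ` {x, y} \<in> M" using inv y(1) by blast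
    then have "?E \<subseteq> M" using y by auto
    moreover have "(\<lambda>e. \<sigma> ` e) ` ?E = ?E" using \<sigma>x \<sigma>y by auto
    ultimately have "M - ?E \<in> invariant_matchings \<sigma> (S - \<Union>?E)"
      by (rule invariant_matching_Diff[OF \<sigma> M])
    moreover have "S - \<Union>?E = S - {x, \<sigma> x} - {y, \<sigma> y}" by blast
    ultimately have "M - ?E \<in> invariant_matchings \<sigma> (S - {x, \<sigma> x} - {y, \<sigma> y})" by simp
    moreover have "M = insert {x, y} (insert {\<sigma> x, \<sigma> y} (M - ?E))" using \<open>?E \<subseteq> M\<close> by auto
    moreover have "y \<in> S - {x, \<sigma> x}" using y False by auto
    ultimately show ?thesis by blast
  qed
qed

lemma card_invariant_matchings_rec:
  assumes "finite S" and \<sigma>: "fpf_involution \<sigma> S" and x: "x \<in> S"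
  shows "card (invariant_matchings \<sigma> S)
    \<le> card (invariant_matchings \<sigma> (S - {x, \<sigma> x}))
      + (\<Sum>y\<in>S - {x, \<sigma> x}. card (invariant_matchings \<sigma> (S - {x, \<sigma> x} - {y, \<sigma> y})))"
proof -
  let ?I = "invariant_matchings \<sigma>"
  let ?B = "\<lambda>y. (\<lambda>M. insert {x, y} (insert {\<sigma> x, \<sigma> y} M)) ` ?I (S - {x, \<sigma> x} - {y, \<sigma> y})"
  have "card (?I S) \<le> card (insert {x, \<sigma> x} ` ?I (S - {x, \<sigma> x}) \<union> (\<Union>y\<in>S - {x, \<sigma> x}. ?B y))"
    using \<open>finite S\<close> invariant_matchings_subset[OF \<sigma> x]
    by (intro card_mono) (auto intro!: finite_imageI finite_invariant_matchings)
  also have "\<dots> \<le> card (insert {x, \<sigma> x} ` ?I (S - {x, \<sigma> x})) + (\<Sum>y\<in>S - {x, \<sigma> x}. card (?B y))"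
    using \<open>finite S\<close> by (intro order.trans[OF card_Un_le] add_left_mono card_UN_le) auto
  also have "\<dots> \<le> card (?I (S - {x, \<sigma> x})) + (\<Sum>y\<in>S - {x, \<sigma> x}. card (?I (S - {x, \<sigma> x} - {y, \<sigma> y})))"
    using \<open>finite S\<close>
    by (intro add_mono sum_mono card_image_le) (auto intro: finite_invariant_matchings)
  finally show ?thesis .
qed

lemma two_power_sqrt_fact_rec:
  "2^k * sqrt (fact k) + 2*k * (2^(k-1) * sqrt (fact (k-1)))
     \<le> (2::real)^(k+1) * sqrt (fact (k+1))"
proof -
  have "2*k * (2^(k-1) * sqrt (fact (k-1))) = 2^k * sqrt (fact k) * sqrt k"
    by (cases k) (simp_all add: fact_Suc real_sqrt_mult)
  moreover have "sqrt (fact (k+1)) = sqrt (fact k) * sqrt (k+1)"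
    by (simp add: fact_Suc real_sqrt_mult)
  moreover have "1 + sqrt k \<le> 2 * sqrt (k+1)"
  proof -
    have "sqrt k \<le> sqrt (k+1)" "1 \<le> sqrt (k+1)" by simp_all
    then show ?thesis by linarith
  qed
  ultimately show ?thesis
    using mult_left_mono[of "1 + sqrt k" "2 * sqrt (k+1)" "2^k * sqrt (fact k)"]
    by (simp add: algebra_simps)
qed

lemma card_invariant_matchings_le:
  "finite S \<Longrightarrow> fpf_involution \<sigma> S \<Longrightarrow> card S = 2*r
    \<Longrightarrow> card (invariant_matchings \<sigma> S) \<le> 2^r * sqrt (fact r)"
proof (induction r arbitrary: S rule: less_induct)
  case (less r)
  note S = less.prems(1) and \<sigma> = less.prems(2) and card_S = less.prems(3)
  show ?case
  proof (cases r)
    case 0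
    then have "S = {}" using S card_S by simp
    then have "invariant_matchings \<sigma> S \<subseteq> {{}}"
      by (auto simp: invariant_matchings_def perfect_matchings_empty)
    then have "card (invariant_matchings \<sigma> S) \<le> card {{} :: 'a set set}"
      by (intro card_mono) auto
    then show ?thesis using 0 by simp
  next
    case (Suc k)
    then obtain x where x: "x \<in> S" using card_S by fastforce
    let ?S1 = "S - {x, \<sigma> x}"
    let ?a = "\<lambda>T. real (card (invariant_matchings \<sigma> T))"
    have S1: "finite ?S1" "fpf_involution \<sigma> ?S1" "card ?S1 = 2*k"
      using fpf_involution_remove_orbit[OF \<sigma> S x] S card_S Suc by simp_all
    have "?a ?S1 \<le> 2^k * sqrt (fact k)" using less.IH[of k] S1 Suc by simp
    moreover have "?a (?S1 - {y, \<sigma> y}) \<le> 2^(k-1) * sqrt (fact (k-1))" if "y \<in> ?S1" for y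
      using less.IH[of "k-1"] fpf_involution_remove_orbit[OF S1(2,1) that] S1 Suc
      by (simp add: diff_mult_distrib2)
    then have "(\<Sum>y\<in>?S1. ?a (?S1 - {y, \<sigma> y})) \<le> 2*k * (2^(k-1) * sqrt (fact (k-1)))"
      using sum_bounded_above[of ?S1 "\<lambda>y. ?a (?S1 - {y, \<sigma> y})"] S1 by simp
    moreover have "?a S \<le> ?a ?S1 + (\<Sum>y\<in>?S1. ?a (?S1 - {y, \<sigma> y}))"
      using of_nat_mono[OF card_invariant_matchings_rec[OF S \<sigma> x], where 'a = real] by simp
    ultimately have "?a S \<le> 2^k * sqrt (fact k) + 2*k * (2^(k-1) * sqrt (fact (k-1)))"
      by linarith
    then show ?thesis using two_power_sqrt_fact_rec[of k] Suc by simp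
  qed
qed

section \<open>Rotations of chord diagrams\<close>

lemma funpow_rot:
  assumes "x \<in> {1..2*n}"
  shows "(rot n ^^ k) x = (x - 1 + k) mod (2*n) + 1"
proof (induction k)
  case 0
  have "x - 1 < 2*n" using assms by auto
  then show ?case using assms by simp
next
  case (Suc k)
  then show ?case by (simp add: rot_def mod_Suc_eq)
qed

lemma funpow_rot_mem: "x \<in> {1..2*n} \<Longrightarrow> (rot n ^^ k) x \<in> {1..2*n}"
  by (simp add: funpow_rot Suc_leI)

lemma funpow_rot_mod:
  assumes "x \<in> {1..2*n}"
  shows "(rot n ^^ k) x = (rot n ^^ (k mod (2*n))) x"
  unfolding funpow_rot[OF assms] mod_add_right_eq ..

lemma funpow_rot_period: "x \<in> {1..2*n} \<Longrightarrow> 2*n dvd k \<Longrightarrow> (rot n ^^ k) x = x"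
  using funpow_rot_mod[of x n k] by simp

lemma bij_betw_funpow_rot: "bij_betw (rot n ^^ k) {1..2*n} {1..2*n}"
proof -
  have "(rot n ^^ ((2*n - 1) * k)) ((rot n ^^ k) x) = x" if x: "x \<in> {1..2*n}" for x
  proof -
    have "(rot n ^^ ((2*n - 1) * k)) ((rot n ^^ k) x) = (rot n ^^ ((2*n - 1) * k + k)) x"
      by (simp add: funpow_add)
    also have "(2*n - 1) * k + k = 2*n*k" using x by (cases n) auto
    finally show ?thesis using funpow_rot_period[OF x] by simp
  qed
  then have "inj_on (rot n ^^ k) {1..2*n}" by (rule inj_on_inverseI)
  moreover have "(rot n ^^ k) ` {1..2*n} \<subseteq> {1..2*n}" using funpow_rot_mem by blast
  ultimately show ?thesis by (simp add: bij_betw_def endo_inj_surj)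
qed

lemma image_perfect_matching:
  assumes f: "bij_betw f S T" and M: "M \<in> perfect_matchings S"
  shows "(\<lambda>e. f ` e) ` M \<in> perfect_matchings T"
proof -
  have inj: "inj_on f S" using f by (rule bij_betw_imp_inj_on)
  have "card (f ` e) = 2" if "e \<in> M" for e
    using perfect_matching_card[OF M that] perfect_matching_subset[OF M that]
    by (metis card_image inj inj_on_subset)
  moreover have "f ` e \<inter> f ` e' = {}" if "e \<in> M" "e' \<in> M" "f ` e \<noteq> f ` e'" for e e'
    using perfect_matching_disjoint[OF M that(1,2)] that perfect_matching_subset[OF M]
    by (metis image_empty inj inj_on_image_Int)
  moreover have "\<Union>((\<lambda>e. f ` e) ` M) = T"
    using perfect_matching_Union[OF M] bij_betw_imp_surj_on[OF f] by blast
  ultimately show ?thesis unfolding perfect_matchings_def by blast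
qed

definition rotate_chords :: "nat \<Rightarrow> nat \<Rightarrow> nat set set \<Rightarrow> nat set set" where
  "rotate_chords n k M = (\<lambda>e. (rot n ^^ k) ` e) ` M"

lemma cyc_equiv_iff:
  "(M, N) \<in> cyc_equiv n
    \<longleftrightarrow> M \<in> chord_sets n \<and> N \<in> chord_sets n \<and> (\<exists>k. rotate_chords n k M = N)"
  unfolding cyc_equiv_def rotate_chords_def by simp

lemma rotate_chords_mem: "M \<in> chord_sets n \<Longrightarrow> rotate_chords n k M \<in> chord_sets n"
  unfolding chord_sets_eq_perfect_matchings rotate_chords_def
  by (rule image_perfect_matching[OF bij_betw_funpow_rot])

lemma rotate_chords_0 [simp]: "rotate_chords n 0 M = M"
  unfolding rotate_chords_def by simp

lemma rotate_chords_add: "rotate_chords n (a + b) M = rotate_chords n a (rotate_chords n b M)"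
  unfolding rotate_chords_def by (simp add: funpow_add image_image image_comp)

lemma rotate_chords_mod:
  assumes M: "M \<in> chord_sets n"
  shows "rotate_chords n k M = rotate_chords n (k mod (2*n)) M"
proof -
  have "(rot n ^^ k) ` e = (rot n ^^ (k mod (2*n))) ` e" if "e \<in> M" for e
  proof (rule image_cong[OF refl])
    fix x assume "x \<in> e"
    then show "(rot n ^^ k) x = (rot n ^^ (k mod (2*n))) x"
      using perfect_matching_subset[OF M[unfolded chord_sets_eq_perfect_matchings] that]
      by (blast intro: funpow_rot_mod)
  qed
  then show ?thesis unfolding rotate_chords_def by (rule image_cong[OF refl])
qed

lemma rotate_chords_period: "M \<in> chord_sets n \<Longrightarrow> 2*n dvd k \<Longrightarrow> rotate_chords n k M = M"
  using rotate_chords_mod[of M n k] by simp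

lemma rotate_chords_mult: "rotate_chords n t M = M \<Longrightarrow> rotate_chords n (t * q) M = M"
  by (induction q) (simp_all add: rotate_chords_add)

section \<open>Counting rotation classes\<close>

lemma finite_chord_sets: "finite (chord_sets n)"
  unfolding chord_sets_eq_perfect_matchings by (simp add: finite_perfect_matchings)

lemma card_chord_sets: "card (chord_sets n) = odd_dfact n"
  unfolding chord_sets_eq_perfect_matchings by (simp add: card_perfect_matchings)

lemma equiv_cyc_equiv:
  assumes "0 < n"
  shows "equiv (chord_sets n) (cyc_equiv n)"
proof (rule equivI)
  show "cyc_equiv n \<subseteq> chord_sets n \<times> chord_sets n" unfolding cyc_equiv_def by blast
  show "refl_on (chord_sets n) (cyc_equiv n)"
    unfolding refl_on_def cyc_equiv_iff by (metis rotate_chords_0)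
  show "sym (cyc_equiv n)"
  proof (rule symI)
    fix M N assume "(M, N) \<in> cyc_equiv n"
    then obtain k where M: "M \<in> chord_sets n" and N: "N \<in> chord_sets n"
      and k: "rotate_chords n k M = N" unfolding cyc_equiv_iff by blast
    have "(2*n - 1) * k + k = 2*n*k" using assms by (cases n) auto
    then have "rotate_chords n ((2*n - 1) * k) N = rotate_chords n (2*n*k) M"
      using k by (metis rotate_chords_add)
    then have "rotate_chords n ((2*n - 1) * k) N = M" using rotate_chords_period[OF M] by simp
    then show "(N, M) \<in> cyc_equiv n" using M N cyc_equiv_iff by blast
  qed
  show "trans (cyc_equiv n)"
  proof (rule transI)
    fix M N P assume "(M, N) \<in> cyc_equiv n" "(N, P) \<in> cyc_equiv n"
    then obtain k l where "M \<in> chord_sets n" "P \<in> chord_sets n"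
      and "rotate_chords n k M = N" "rotate_chords n l N = P" unfolding cyc_equiv_iff by blast
    moreover from this have "rotate_chords n (l + k) M = P" by (simp add: rotate_chords_add)
    ultimately show "(M, P) \<in> cyc_equiv n" unfolding cyc_equiv_iff by blast
  qed
qed

lemma cyc_equiv_class:
  assumes "0 < n" and M: "M \<in> chord_sets n"
  shows "cyc_equiv n `` {M} = (\<lambda>k. rotate_chords n k M) ` {..<2*n}"
proof (intro equalityI subsetI)
  fix N assume "N \<in> cyc_equiv n `` {M}"
  then have "(M, N) \<in> cyc_equiv n" by simp
  then obtain k where "N = rotate_chords n k M" unfolding cyc_equiv_iff by blast
  then have "N = rotate_chords n (k mod (2*n)) M" using rotate_chords_mod[OF M] by simp
  moreover have "k mod (2*n) \<in> {..<2*n}" using \<open>0 < n\<close> by simp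
  ultimately show "N \<in> (\<lambda>k. rotate_chords n k M) ` {..<2*n}" by blast
next
  fix N assume "N \<in> (\<lambda>k. rotate_chords n k M) ` {..<2*n}"
  then obtain k where "N = rotate_chords n k M" by blast
  then have "(M, N) \<in> cyc_equiv n" using M rotate_chords_mem unfolding cyc_equiv_iff by blast
  then show "N \<in> cyc_equiv n `` {M}" by simp
qed

definition symmetric_diagrams :: "nat \<Rightarrow> nat set set set" where
  "symmetric_diagrams n = {M \<in> chord_sets n. \<exists>t. 0 < t \<and> t < 2*n \<and> rotate_chords n t M = M}"

lemma inj_on_rotate_chords:
  assumes M: "M \<in> chord_sets n" "M \<notin> symmetric_diagrams n"
  shows "inj_on (\<lambda>k. rotate_chords n k M) {..<2*n}"
proof (rule linorder_inj_onI')
  fix a b assume "a \<in> {..<2*n}" "b \<in> {..<2*n}" "a < b"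
  then have a: "2*n - a + a = 2*n" and b: "2*n - a + b = (b - a) + 2*n" by auto
  show "rotate_chords n a M \<noteq> rotate_chords n b M"
  proof
    assume eq: "rotate_chords n a M = rotate_chords n b M"
    have "M = rotate_chords n (2*n - a + a) M"
      unfolding a using rotate_chords_period[OF M(1)] by simp
    also have "\<dots> = rotate_chords n (2*n - a + b) M" by (simp only: rotate_chords_add eq)
    also have "\<dots> = rotate_chords n (b - a) M"
      unfolding b rotate_chords_add using rotate_chords_period[OF M(1)] by simp
    finally have "rotate_chords n (b - a) M = M" ..
    moreover have "0 < b - a" "b - a < 2*n" using \<open>a < b\<close> \<open>b \<in> {..<2*n}\<close> by auto
    ultimately show False using M unfolding symmetric_diagrams_def by blast
  qed
qed

lemma cyc_class_card_le:
  assumes "0 < n" and "C \<in> chord_sets n // cyc_equiv n"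
  shows "finite C" "card C \<le> 2*n"
proof -
  obtain M where "M \<in> chord_sets n" "C = cyc_equiv n `` {M}" using assms(2) by (rule quotientE)
  then have "C = (\<lambda>k. rotate_chords n k M) ` {..<2*n}" using cyc_equiv_class[OF \<open>0 < n\<close>] by simp
  then show "finite C" "card C \<le> 2*n" using card_image_le[of "{..<2*n}"] by simp_all
qed

lemma cyc_class_subset_symmetric_diagrams:
  assumes "0 < n" and C: "C \<in> chord_sets n // cyc_equiv n" and "card C \<noteq> 2*n"
  shows "C \<subseteq> symmetric_diagrams n"
proof
  fix M assume "M \<in> C"
  obtain M0 where "C = cyc_equiv n `` {M0}" using C by (rule quotientE)
  with \<open>M \<in> C\<close> have "(M0, M) \<in> cyc_equiv n" by simp
  then have M: "M \<in> chord_sets n" "C = cyc_equiv n `` {M}"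
    using \<open>C = cyc_equiv n `` {M0}\<close> equiv_class_eq[OF equiv_cyc_equiv[OF \<open>0 < n\<close>]]
    unfolding cyc_equiv_iff by auto
  show "M \<in> symmetric_diagrams n"
  proof (rule ccontr)
    assume "M \<notin> symmetric_diagrams n"
    then have "card C = 2*n"
      using M cyc_equiv_class[OF \<open>0 < n\<close>] inj_on_rotate_chords by (simp add: card_image)
    with \<open>card C \<noteq> 2*n\<close> show False ..
  qed
qed

lemma odd_dfact_le_c_num:
  assumes "0 < n"
  shows "odd_dfact n \<le> 2*n * c_num n"
proof -
  let ?Q = "chord_sets n // cyc_equiv n"
  have "odd_dfact n = card (\<Union>?Q)"
    using Union_quotient[OF equiv_cyc_equiv[OF assms]] card_chord_sets by simp
  also have "\<dots> \<le> (\<Sum>C\<in>?Q. card C)" by (rule card_Union_le_sum_card)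
  also have "\<dots> \<le> (\<Sum>C\<in>?Q. 2*n)" by (intro sum_mono cyc_class_card_le assms)
  also have "\<dots> = 2*n * c_num n" unfolding c_num_def by simp
  finally show ?thesis .
qed

text \<open>Classes of full size \<open>2n\<close> together cover at most all \<open>(2n-1)!!\<close> diagrams; every other
  class is a nonempty set of symmetric diagrams.\<close>

lemma c_num_le:
  assumes "0 < n"
  shows "2*n * c_num n \<le> odd_dfact n + 2*n * card (symmetric_diagrams n)"
proof -
  have equiv: "equiv (chord_sets n) (cyc_equiv n)" by (rule equiv_cyc_equiv[OF assms])
  let ?Q = "chord_sets n // cyc_equiv n"
  let ?full = "{C \<in> ?Q. card C = 2*n}" and ?small = "{C \<in> ?Q. card C \<noteq> 2*n}"
  have finite_Q: "finite ?Q" using finite_quotient[OF finite_chord_sets equiv_type[OF equiv]] .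
  have disjoint: "pairwise disjnt X" if "X \<subseteq> ?Q" for X
    using quotient_disj[OF equiv] that unfolding pairwise_def disjnt_def by blast
  have "2*n * card ?full = card (\<Union>?full)"
    using disjoint[of ?full] cyc_class_card_le[OF assms]
    by (subst card_Union_disjoint) auto
  also have "\<dots> \<le> card (chord_sets n)"
    using Union_quotient[OF equiv] by (intro card_mono finite_chord_sets) auto
  finally have full: "2*n * card ?full \<le> odd_dfact n" by (simp add: card_chord_sets)
  have "card ?small = (\<Sum>C\<in>?small. 1)" by simp
  also have "\<dots> \<le> (\<Sum>C\<in>?small. card C)"
  proof (rule sum_mono)
    fix C assume "C \<in> ?small"
    then have "C \<noteq> {}" "finite C"
      using in_quotient_imp_non_empty[OF equiv] cyc_class_card_le[OF assms] by auto
    then show "1 \<le> card C" by (simp add: Suc_le_eq card_gt_0_iff)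
  qed
  also have "\<dots> = card (\<Union>?small)"
    using disjoint[of ?small] cyc_class_card_le[OF assms] by (subst card_Union_disjoint) auto
  also have "\<dots> \<le> card (symmetric_diagrams n)"
    using cyc_class_subset_symmetric_diagrams[OF assms] finite_chord_sets
    by (intro card_mono) (auto simp: symmetric_diagrams_def intro: rev_finite_subset)
  finally have small: "card ?small \<le> card (symmetric_diagrams n)" .
  have "c_num n = card ?full + card ?small"
    unfolding c_num_def using finite_Q
    by (subst card_Un_disjoint[symmetric]) (auto intro: arg_cong[where f = card])
  then show ?thesis using full small by (simp add: add_mono algebra_simps)
qed

section \<open>Counting symmetric diagrams\<close>

definition rotation_fixed_diagrams :: "nat \<Rightarrow> nat \<Rightarrow> nat set set set" where
  "rotation_fixed_diagrams n d = {M \<in> chord_sets n. rotate_chords n d M = M}"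

text \<open>If a rotation by \<open>t\<close> fixes a diagram, so does the rotation by \<open>d = gcd t (2n)\<close>, a proper
  divisor of \<open>2n\<close>: either \<open>d = n\<close> or \<open>3d \<le> 2n\<close>.\<close>

lemma symmetric_diagrams_subset:
  assumes "0 < n"
  shows "symmetric_diagrams n
    \<subseteq> rotation_fixed_diagrams n n \<union> (\<Union>d\<in>{1..2*n div 3}. rotation_fixed_diagrams n d)"
proof
  fix M assume "M \<in> symmetric_diagrams n"
  then obtain t where M: "M \<in> chord_sets n" and t: "0 < t" "t < 2*n" "rotate_chords n t M = M"
    unfolding symmetric_diagrams_def by blast
  obtain d x y where d: "d dvd t" "d dvd 2*n" "t * x = 2*n*y + d"
    using bezout_add_strong_nat[of t "2*n"] t(1) by auto
  have "rotate_chords n d M = rotate_chords n d (rotate_chords n (2*n*y) M)"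
    using rotate_chords_period[OF M] by simp
  also have "\<dots> = rotate_chords n (t * x) M" by (simp add: d(3) add.commute rotate_chords_add)
  also have "\<dots> = M" using rotate_chords_mult[OF t(3)] .
  finally have fixed: "M \<in> rotation_fixed_diagrams n d"
    using M unfolding rotation_fixed_diagrams_def by blast
  obtain m where m: "2*n = d * m" using d(2) by blast
  have "0 < d" "d < 2*n" using d(1) t by (auto intro: dvd_imp_le dvd_pos_nat le_less_trans)
  then have "m \<noteq> 0" "m \<noteq> 1" using m assms by auto
  then have "m = 2 \<or> 3 \<le> m" by linarith
  then have "d = n \<or> d \<in> {1..2*n div 3}"
    using m \<open>0 < d\<close> by (auto simp: less_eq_div_iff_mult_less_eq mult.commute intro: mult_left_mono)
  then show "M \<in> rotation_fixed_diagrams n n \<union> (\<Union>d\<in>{1..2*n div 3}. rotation_fixed_diagrams n d)"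
    using fixed by blast
qed

lemma fpf_involution_funpow_rot_half: "fpf_involution (rot n ^^ n) {1..2*n}"
  unfolding fpf_involution_def
proof (intro ballI conjI)
  fix x assume x: "x \<in> {1..2*n}"
  show "(rot n ^^ n) x \<in> {1..2*n}" using funpow_rot_mem[OF x] .
  have "(rot n ^^ (n + n)) x = x" using funpow_rot_period[OF x, of "2*n"] by (simp add: mult_2)
  then show "(rot n ^^ n) ((rot n ^^ n) x) = x" by (simp add: funpow_add)
  show "(rot n ^^ n) x \<noteq> x"
  proof
    assume "(rot n ^^ n) x = x"
    then have "(x - 1 + n) mod (2*n) = (x - 1) mod (2*n)" using x by (simp add: funpow_rot)
    then have "2*n dvd n" using mod_eq_dvd_iff_nat[of "x - 1" "x - 1 + n" "2*n"] by simp
    then show False using x by (auto dest: dvd_imp_le)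
  qed
qed

lemma card_rotation_fixed_diagrams_half:
  "card (rotation_fixed_diagrams n n) \<le> 2^n * sqrt (fact n)"
proof -
  have "rotation_fixed_diagrams n n = invariant_matchings (rot n ^^ n) {1..2*n}"
    unfolding rotation_fixed_diagrams_def invariant_matchings_def rotate_chords_def
      chord_sets_eq_perfect_matchings ..
  then show ?thesis
    using card_invariant_matchings_le[OF _ fpf_involution_funpow_rot_half] by simp
qed

lemma funpow_rot_cover:
  assumes "0 < d" "d \<le> 2*n" and y: "y \<in> {1..2*n}"
  shows "\<exists>q. \<exists>x\<in>{1..d}. y = (rot n ^^ (d*q)) x"
proof (intro exI bexI)
  let ?x = "(y - 1) mod d + 1"
  show "?x \<in> {1..d}" using assms by (simp add: Suc_leI)
  then have "?x \<in> {1..2*n}" using assms by auto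
  then have "(rot n ^^ (d * ((y - 1) div d))) ?x = (y - 1) mod (2*n) + 1" by (simp add: funpow_rot)
  also have "\<dots> = y" using y by (cases y) auto
  finally show "y = (rot n ^^ (d * ((y - 1) div d))) ?x" ..
qed

text \<open>A diagram fixed by the rotation by \<open>d\<close> is determined by the mates of \<open>1, \<dots>, d\<close>.\<close>

lemma card_rotation_fixed_diagrams_le:
  assumes "0 < d" "d \<le> 2*n"
  shows "card (rotation_fixed_diagrams n d) \<le> (2*n)^d"
proof -
  let ?S = "{1..2*n}" and ?F = "rotation_fixed_diagrams n d"
  have PM: "M \<in> perfect_matchings ?S" if "M \<in> ?F" for M
    using that unfolding rotation_fixed_diagrams_def chord_sets_eq_perfect_matchings by blast
  have mate_funpow_rot: "mate M ((rot n ^^ (d*q)) x) = (rot n ^^ (d*q)) (mate M x)"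
    if "M \<in> ?F" "x \<in> ?S" for M q x
    using mate_image[OF PM[OF \<open>M \<in> ?F\<close>] _ \<open>x \<in> ?S\<close>] rotate_chords_mult[of n d M q] \<open>M \<in> ?F\<close>
    unfolding rotation_fixed_diagrams_def rotate_chords_def by simp
  have "inj_on (\<lambda>M. restrict (mate M) {1..d}) ?F"
  proof (rule inj_onI)
    fix M M' assume M: "M \<in> ?F" and M': "M' \<in> ?F"
      and eq: "restrict (mate M) {1..d} = restrict (mate M') {1..d}"
    have "mate M y = mate M' y" if "y \<in> ?S" for y
    proof -
      obtain q x where "x \<in> {1..d}" "y = (rot n ^^ (d*q)) x"
        using funpow_rot_cover[OF assms \<open>y \<in> ?S\<close>] by blast
      moreover from this have "x \<in> ?S" using assms by auto
      ultimately show ?thesis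
        using mate_funpow_rot[OF M] mate_funpow_rot[OF M'] fun_cong[OF eq, of x] by simp
    qed
    then show "M = M'" using perfect_matching_eqI PM M M' by blast
  qed
  moreover have "(\<lambda>M. restrict (mate M) {1..d}) ` ?F \<subseteq> {1..d} \<rightarrow>\<^sub>E ?S"
    using mate_in_perfect_matching(2)[OF PM] assms by auto
  ultimately have "card ?F \<le> card ({1..d} \<rightarrow>\<^sub>E ?S)"
    by (metis card_image card_mono finite_PiE finite_atLeastAtMost)
  then show ?thesis by (simp add: card_PiE)
qed

lemma card_symmetric_diagrams_le:
  assumes "0 < n"
  shows "card (symmetric_diagrams n) \<le> 2^n * sqrt (fact n) + real n * (2 * real n)^(2*n div 3)"
proof -
  let ?F = "rotation_fixed_diagrams n" and ?m = "2*n div 3"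
  have finite_F: "finite (?F d)" for d
    using finite_chord_sets unfolding rotation_fixed_diagrams_def by simp
  have "card (symmetric_diagrams n) \<le> card (?F n \<union> (\<Union>d\<in>{1..?m}. ?F d))"
    using symmetric_diagrams_subset[OF assms] finite_F by (intro card_mono) auto
  also have "\<dots> \<le> card (?F n) + (\<Sum>d\<in>{1..?m}. card (?F d))"
    by (intro order.trans[OF card_Un_le] add_left_mono card_UN_le) simp
  also have "(\<Sum>d\<in>{1..?m}. card (?F d)) \<le> (\<Sum>d\<in>{1..?m}. (2*n)^?m)"
  proof (rule sum_mono)
    fix d assume d: "d \<in> {1..?m}"
    then have "card (?F d) \<le> (2*n)^d" by (intro card_rotation_fixed_diagrams_le) auto
    also have "\<dots> \<le> (2*n)^?m" using d assms by (intro power_increasing) auto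
    finally show "card (?F d) \<le> (2*n)^?m" .
  qed
  also have "\<dots> \<le> n * (2*n)^?m"
    using div_le_mono[of "2*n" "3*n" 3] by (simp add: mult_right_mono)
  finally have "card (symmetric_diagrams n) \<le> card (?F n) + n * (2*n)^?m" by simp
  then have "real (card (symmetric_diagrams n)) \<le> real (card (?F n)) + n * (2*n)^?m"
    using of_nat_mono by fastforce
  then show ?thesis using card_rotation_fixed_diagrams_half[of n] by simp
qed

section \<open>Asymptotics\<close>

lemma power_div_fact_le_exp:
  fixes x :: real
  assumes "0 \<le> x"
  shows "x ^ n / fact n \<le> exp x"
proof -
  have "(\<lambda>k. x ^ k / fact k) sums exp x"
    using exp_converges[of x] by (simp add: divide_inverse_commute)
  then show ?thesis using sum_le_suminf[of "\<lambda>k. x ^ k / fact k" "{n}"] assms by (simp add: sums_iff)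
qed

lemma exp_le_fact: "exp (real n * ln (real n) - real n) \<le> fact n"
proof (cases "n = 0")
  case False
  then have "exp (real n * ln (real n)) = real n ^ n" by (simp add: exp_of_nat_mult)
  then show ?thesis
    using power_div_fact_le_exp[of "real n" n] by (simp add: exp_diff field_simps)
qed simp

lemma power_le_exp_mult_ln:
  fixes x y :: real
  assumes "1 \<le> x" "real k \<le> y"
  shows "x ^ k \<le> exp (y * ln x)"
proof -
  have "x ^ k = exp (real k * ln x)" using assms by (simp add: exp_of_nat_mult)
  also have "\<dots> \<le> exp (y * ln x)" using assms by (simp add: mult_right_mono)
  finally show ?thesis .
qed

lemma odd_dfact_pos: "0 < odd_dfact n"
  unfolding odd_dfact_def by (rule prod_pos) auto

lemma fact_le_odd_dfact: "fact n \<le> odd_dfact n"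
  unfolding odd_dfact_def fact_prod of_nat_id by (rule prod_mono) auto

lemma symmetric_diagrams_ratio_le:
  fixes n :: nat
  defines "L \<equiv> real n * ln (real n) - real n"
  assumes "1 \<le> n"
  shows "2 * real n * card (symmetric_diagrams n) / odd_dfact n
    \<le> 2 * real n * 2^n / sqrt (exp L) + 2 * real n ^ 2 * exp (2/3 * real n * ln (2 * real n) - L)"
proof -
  let ?P = "(2 * real n)^(2*n div 3)"
  have fact_pos: "0 < (fact n :: real)" by simp
  have "(fact n :: real) \<le> odd_dfact n" using of_nat_mono[OF fact_le_odd_dfact[of n]] by simp
  then have "2 * real n * card (symmetric_diagrams n) / odd_dfact n
      \<le> 2 * real n * card (symmetric_diagrams n) / fact n"
    using fact_pos by (intro divide_left_mono mult_pos_pos) (simp_all add: odd_dfact_pos)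
  also have "\<dots> \<le> 2 * real n * (2^n * sqrt (fact n) + real n * ?P) / fact n"
    using card_symmetric_diagrams_le[of n] \<open>1 \<le> n\<close> fact_pos
    by (intro divide_right_mono mult_left_mono) simp_all
  also have "\<dots> = 2 * real n * 2^n / sqrt (fact n) + 2 * real n ^ 2 * (?P / fact n)"
    using fact_pos by (simp add: field_simps power2_eq_square)
  also have "\<dots> \<le> 2 * real n * 2^n / sqrt (exp L)
                 + 2 * real n ^ 2 * exp (2/3 * real n * ln (2 * real n) - L)"
  proof (intro add_mono mult_left_mono divide_left_mono)
    show "sqrt (exp L) \<le> sqrt (fact n)" using exp_le_fact unfolding L_def by simp
    have "real (2*n div 3) \<le> 2/3 * real n" using of_nat_div_le_of_nat[of "2*n" 3] by simp
    then have "?P \<le> exp (2/3 * real n * ln (2 * real n))"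
      using \<open>1 \<le> n\<close> by (intro power_le_exp_mult_ln) simp_all
    then have "?P / fact n \<le> exp (2/3 * real n * ln (2 * real n)) / exp L"
      unfolding L_def by (intro frac_le exp_le_fact) simp_all
    then show "?P / fact n \<le> exp (2/3 * real n * ln (2 * real n) - L)"
      by (simp only: exp_diff)
  qed simp_all
  finally show ?thesis .
qed

lemma symmetric_diagrams_negligible:
  "(\<lambda>n. 2 * real n * card (symmetric_diagrams n) / odd_dfact n) \<longlonglongrightarrow> 0"
proof (rule real_tendsto_sandwich[where f = "\<lambda>_. 0"])
  let ?L = "\<lambda>n. real n * ln (real n) - real n"
  let ?g = "\<lambda>n. 2 * real n * 2^n / sqrt (exp (?L n))
               + 2 * real n ^ 2 * exp (2/3 * real n * ln (2 * real n) - ?L n)"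
  show "\<forall>\<^sub>F n in sequentially. 2 * real n * card (symmetric_diagrams n) / odd_dfact n \<le> ?g n"
    by (rule eventually_sequentiallyI[of 1]) (rule symmetric_diagrams_ratio_le)
  show "?g \<longlonglongrightarrow> 0" by (intro tendsto_add_zero; real_asymp)
qed simp_all

theorem corollary1:
  shows "(\<forall>n\<ge>1. real (c_num n) \<ge> real (odd_dfact n) / (2 * real n))
       \<and> (\<lambda>n. real (c_num n)) \<sim>[at_top] (\<lambda>n. real (odd_dfact n) / (2 * real n))"
proof
  have lower: "real (odd_dfact n) \<le> 2 * real n * real (c_num n)" if "1 \<le> n" for n
    using of_nat_mono[OF odd_dfact_le_c_num, of n] that by simp
  have upper: "2 * real n * real (c_num n)
      \<le> real (odd_dfact n) + 2 * real n * card (symmetric_diagrams n)" if "1 \<le> n" for n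
    using of_nat_mono[OF c_num_le, of n] that by simp
  show "\<forall>n\<ge>1. real (c_num n) \<ge> real (odd_dfact n) / (2 * real n)"
    using lower by (simp add: divide_le_eq mult.commute)
  let ?ratio = "\<lambda>n. real (c_num n) / (real (odd_dfact n) / (2 * real n))"
  have "?ratio \<longlonglongrightarrow> 1"
  proof (rule real_tendsto_sandwich)
    show "\<forall>\<^sub>F n in sequentially. 1 \<le> ?ratio n"
      using lower by (intro eventually_sequentiallyI[of 1]) (simp add: field_simps odd_dfact_pos)
    show "\<forall>\<^sub>F n in sequentially.
            ?ratio n \<le> 1 + 2 * real n * card (symmetric_diagrams n) / odd_dfact n"
      using upper by (intro eventually_sequentiallyI[of 1]) (simp add: field_simps odd_dfact_pos)
    show "(\<lambda>n. 1 + 2 * real n * card (symmetric_diagrams n) / odd_dfact n) \<longlonglongrightarrow> 1"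
      using tendsto_add[OF tendsto_const symmetric_diagrams_negligible, of 1] by simp
  qed simp
  then show "(\<lambda>n. real (c_num n)) \<sim>[at_top] (\<lambda>n. real (odd_dfact n) / (2 * real n))"
    by (intro asymp_equivI') simp
qed

end
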